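(* Let $k=2r$ with $r\ge1$, $G=BS(1,k)$, and $m>0$. Let $\mathcal{A}_m$ be the set of words $a^{x_0}ta^{x_1}t\cdots a^{x_{m-1}}t$ ($x_i\in\mathbb{Z}$) satisfying: (1) $|x_i|\le r$ for all $i$; (2) for each $i$, if $x_{i-1}=r$ then $0\le x_i<r$, and if $x_{i-1}=-r$ then $-r<x_i\le0$ (with the convention $x_{-1}=x_{m-1}$); (3) if $m$ is even, the words $(a^{-(r-1)}ta^{-r}t)^{m/2}$ and $(a^{-r}ta^{-(r-1)}t)^{m/2}$ are excluded. Then two words in $\mathcal{A}_m$ represent conjugate elements of $G$ if and only if they are cyclic permutations of each other, and every word in $\mathcal{A}_m$ is a conjugacy geodesic.
   Context: $BS(1,k)=\langle a,t\mid tat^{-1}=a^k\rangle$. $a^x$ denotes $|x|$ copies of $a$ or $a^{-1}$ according to the sign of $x$. Word length is with respect to $\{a,t\}$. A word is a conjugacy geodesic if it is a geodesic word and the element it represents has minimal length among all elements of its conjugacy class. *)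

theory Defs
  imports Main
begin

text \<open>Words over the generators a, t of BS(1,k) and their inverses.
  A letter is a generator together with a sign (True = positive exponent).\<close>

datatype gen = GA | GT

type_synonym letter = "gen \<times> bool"
type_synonym word = "letter list"

definition inv_letter :: "letter \<Rightarrow> letter" where
  "inv_letter l = (fst l, \<not> snd l)"

definition inv_word :: "word \<Rightarrow> word" where
  "inv_word w = rev (map inv_letter w)"

text \<open>Equality in BS(1,k) = < a, t | t a t^-1 = a^k >: the congruence on words
  generated by free cancellation and the defining relator.\<close>

inductive bs_eq :: "nat \<Rightarrow> word \<Rightarrow> word \<Rightarrow> bool" for k :: nat where
  bs_refl: "bs_eq k w w"
| bs_sym: "bs_eq k u v \<Longrightarrow> bs_eq k v u"
| bs_trans: "bs_eq k u v \<Longrightarrow> bs_eq k v w \<Longrightarrow> bs_eq k u w"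
| bs_ctxt: "bs_eq k u v \<Longrightarrow> bs_eq k (x @ u @ y) (x @ v @ y)"
| bs_free: "bs_eq k [l, inv_letter l] []"
| bs_rel: "bs_eq k [(GT, True), (GA, True), (GT, False)] (replicate k (GA, True))"

definition bs_length :: "nat \<Rightarrow> word \<Rightarrow> nat" where
  "bs_length k w = (LEAST n. \<exists>v. bs_eq k v w \<and> length v = n)"

definition bs_geodesic :: "nat \<Rightarrow> word \<Rightarrow> bool" where
  "bs_geodesic k w \<longleftrightarrow> length w = bs_length k w"

definition bs_conj :: "nat \<Rightarrow> word \<Rightarrow> word \<Rightarrow> bool" where
  "bs_conj k u v \<longleftrightarrow> (\<exists>g. bs_eq k (g @ u @ inv_word g) v)"

definition bs_conj_geodesic :: "nat \<Rightarrow> word \<Rightarrow> bool" where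
  "bs_conj_geodesic k w \<longleftrightarrow>
     bs_geodesic k w \<and> (\<forall>v. bs_conj k v w \<longrightarrow> bs_length k w \<le> bs_length k v)"

definition apow :: "int \<Rightarrow> word" where
  "apow x = (if x \<ge> 0 then replicate (nat x) (GA, True) else replicate (nat (- x)) (GA, False))"

definition tword :: "int list \<Rightarrow> word" where
  "tword xs = concat (map (\<lambda>x. apow x @ [(GT, True)]) xs)"

definition A_set :: "nat \<Rightarrow> nat \<Rightarrow> word set" where
  "A_set r m = {w. \<exists>xs. length xs = m \<and> w = tword xs
      \<and> (\<forall>i<m. \<bar>xs ! i\<bar> \<le> int r)
      \<and> (\<forall>i<m. (xs ! ((i + m - 1) mod m) = int r \<longrightarrow> 0 \<le> xs ! i \<and> xs ! i < int r)
              \<and> (xs ! ((i + m - 1) mod m) = - int r \<longrightarrow> - int r < xs ! i \<and> xs ! i \<le> 0))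
      \<and> (even m \<longrightarrow>
           w \<noteq> concat (replicate (m div 2) (tword [- (int r - 1), - int r]))
         \<and> w \<noteq> concat (replicate (m div 2) (tword [- int r, - (int r - 1)])))}"

end

(*
  BS(1,k) acts on Z[1/k] by a: z |-> z + 1 and t: z |-> k z. Modulo k^m - 1, where k is a unit,
  every word of t-exponent sum m acts as a translation, and conjugate such words have translation
  amounts differing by a factor k^p. An amount is represented by an m-periodic digit sequence x
  with cyclic value sum_{i<m} x_i k^i; multiplication by k rotates the digits. The word
  a^x_0 t ... a^x_(m-1) t has the digit sequence x, and an arbitrary word has a digit sequence
  whose weight sum |x_i| is at most its number of letters a^(+-1).

  If x and y have congruent cyclic values then y_j = x_j + k E_(j+1) - E_j for periodic integer
  carries E. For k = 2r and digit sequences satisfying the conditions of A_set, the carries are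
  constantly 0, 1 or -1, and the last two cases force x or y to be one of the excluded alternating
  sequences; moreover a telescoping potential shows that carries never decrease the weight of x.
  Hence conjugate words of A_set are cyclic permutations of each other, and a conjugate of
  w in A_set has at least m letters t^(+-1) and at least as many letters a^(+-1) as w.
*)

theory Submission
  imports Defs "HOL-Number_Theory.Cong"
begin

section \<open>Congruences modulo k^m - 1\<close>

lemma power_cong_one: "m dvd p \<Longrightarrow> [(k::int) ^ p = 1] (mod k ^ m - 1)"
proof -
  assume "m dvd p"
  then obtain n where "p = m * n" by blast
  have "[(k ^ m) ^ n = 1 ^ n] (mod k ^ m - 1)"
    by (rule cong_pow) (simp add: cong_iff_dvd_diff)
  then show ?thesis by (simp add: \<open>p = m * n\<close> power_mult)
qed

lemma power_mult_cong: "[(k::int) ^ m * z = z] (mod k ^ m - 1)"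
  using cong_scalar_right[OF power_cong_one[of m m k], of z] by simp

lemma coprime_power_power_minus_one:
  assumes "m > 0"
  shows "coprime ((k::int) ^ j) (k ^ m - 1)"
proof -
  have "coprime (k ^ m) (k ^ m - 1)" by simp
  then have "coprime k (k ^ m - 1)"
    using assms by (metis coprime_power_left_iff neq0_conv)
  then show ?thesis by simp
qed

section \<open>Periodic digit sequences\<close>

definition periodic :: "nat \<Rightarrow> (nat \<Rightarrow> 'a) \<Rightarrow> bool" where
  "periodic m f \<longleftrightarrow> (\<forall>j. f (j + m) = f j)"

lemma periodic_add_mult:
  assumes "periodic m f"
  shows "f (j + m * n) = f j"
proof (induction n)
  case (Suc n)
  have "f ((j + m * n) + m) = f (j + m * n)" using assms unfolding periodic_def by blast
  then show ?case using Suc by (simp add: ac_simps)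
qed simp

lemma periodic_mod: "periodic m f \<Longrightarrow> f (j mod m) = f j"
  using periodic_add_mult[of m f "j mod m" "j div m"] by simp

lemma periodic_shift: "periodic m f \<Longrightarrow> periodic m (\<lambda>i. f (i + c))"
  unfolding periodic_def by (metis add.assoc add.commute)

lemma periodic_comp: "periodic m f \<Longrightarrow> periodic m (\<lambda>j. g (f j))"
  by (simp add: periodic_def)

lemma periodic_propagate:
  assumes "m > 0" "periodic m P" "P j0" "\<And>j. P j \<Longrightarrow> P (Suc j)"
  shows "P j"
proof -
  have after_j0: "P (j0 + n)" for n
    by (induction n) (use assms(3,4) in auto)
  have "j0 \<le> j + m * j0"
    using assms(1) by (simp add: trans_le_add2)
  then have "P (j + m * j0)"
    using after_j0[of "j + m * j0 - j0"] by simp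
  then show ?thesis using periodic_add_mult[OF assms(2)] by simp
qed

lemma sum_periodic_Suc:
  assumes "periodic m g"
  shows "(\<Sum>i<m. g (Suc i)) = (\<Sum>i<m. g i :: 'a::comm_monoid_add)"
proof (cases m)
  case (Suc n)
  have "(\<Sum>i<Suc n. g (Suc i)) = (\<Sum>i<n. g (Suc i)) + g (Suc n)" by simp
  also have "g (Suc n) = g 0" using assms Suc unfolding periodic_def by (metis add_0)
  also have "(\<Sum>i<n. g (Suc i)) + g 0 = (\<Sum>i<Suc n. g i)"
    by (simp only: sum.lessThan_Suc_shift add.commute)
  finally show ?thesis using Suc by simp
qed simp

lemma sum_periodic_shift:
  "periodic m g \<Longrightarrow> (\<Sum>i<m. g (i + c)) = (\<Sum>i<m. g i :: 'a::comm_monoid_add)"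
proof (induction c)
  case (Suc c)
  then show ?case
    using sum_periodic_Suc[OF periodic_shift[OF Suc.prems, of c]] by simp
qed simp

definition cyclic_value :: "int \<Rightarrow> nat \<Rightarrow> (nat \<Rightarrow> int) \<Rightarrow> int" where
  "cyclic_value k m x = (\<Sum>i<m. x i * k ^ i)"

definition weight :: "nat \<Rightarrow> (nat \<Rightarrow> int) \<Rightarrow> int" where
  "weight m x = (\<Sum>i<m. \<bar>x i\<bar>)"

lemma weight_shift: "periodic m x \<Longrightarrow> weight m (\<lambda>i. x (i + c)) = weight m x"
  unfolding weight_def by (rule sum_periodic_shift) (simp add: periodic_def)

lemma cyclic_value_diff:
  "cyclic_value k m (\<lambda>i. x i - y i) = cyclic_value k m x - cyclic_value k m y"
  by (simp add: cyclic_value_def sum_subtractf left_diff_distrib)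

lemma cyclic_value_Suc:
  assumes "periodic m x"
  shows "k * cyclic_value k m (\<lambda>i. x (Suc i)) = cyclic_value k m x + x 0 * (k ^ m - 1)"
proof (cases m)
  case (Suc n)
  let ?S = "\<Sum>i<n. x (Suc i) * k ^ Suc i"
  have "k * cyclic_value k m (\<lambda>i. x (Suc i)) = (\<Sum>i<Suc n. x (Suc i) * k ^ Suc i)"
    unfolding cyclic_value_def Suc sum_distrib_left by (simp add: mult.left_commute)
  also have "\<dots> = ?S + x (Suc n) * k ^ m"
    unfolding Suc by (rule sum.lessThan_Suc)
  also have "x (Suc n) = x 0"
    using assms Suc unfolding periodic_def by (metis add_0)
  finally have "k * cyclic_value k m (\<lambda>i. x (Suc i)) = ?S + x 0 * k ^ m" .
  moreover have "cyclic_value k m x = x 0 + ?S"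
    unfolding cyclic_value_def Suc sum.lessThan_Suc_shift by simp
  ultimately show ?thesis by (simp add: algebra_simps)
qed (simp add: cyclic_value_def)

lemma cyclic_value_shift_cong:
  assumes "periodic m x"
  shows "[k ^ j * cyclic_value k m (\<lambda>i. x (i + j)) = cyclic_value k m x] (mod k ^ m - 1)"
proof (induction j)
  case (Suc j)
  let ?A = "cyclic_value k m (\<lambda>i. x (i + Suc j))" and ?B = "cyclic_value k m (\<lambda>i. x (i + j))"
  have "k * ?A = ?B + x j * (k ^ m - 1)"
    using cyclic_value_Suc[OF periodic_shift[OF assms, of j], of k] by simp
  then have "k ^ Suc j * ?A = k ^ j * ?B + k ^ j * x j * (k ^ m - 1)"
    by (metis distrib_left mult.assoc power_Suc2 mult.commute)
  then have "[k ^ Suc j * ?A = k ^ j * ?B] (mod k ^ m - 1)"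
    by (simp add: cong_iff_dvd_diff)
  then show ?case using Suc.IH by (rule cong_trans)
qed simp

lemma cyclic_value_mult_power:
  assumes "periodic m x" "m > 0"
  shows "[k ^ p * cyclic_value k m x = cyclic_value k m (\<lambda>i. x (i + (m - 1) * p))] (mod k ^ m - 1)"
proof -
  let ?c = "(m - 1) * p"
  let ?V = "cyclic_value k m (\<lambda>i. x (i + ?c))"
  have "[k ^ p * (k ^ ?c * ?V) = k ^ p * cyclic_value k m x] (mod k ^ m - 1)"
    using cyclic_value_shift_cong[OF assms(1)] by (rule cong_scalar_left)
  then have "[k ^ p * cyclic_value k m x = k ^ p * (k ^ ?c * ?V)] (mod k ^ m - 1)"
    by (rule cong_sym)
  also have "p + ?c = m * p" using assms(2) by (cases m) auto
  then have "k ^ p * (k ^ ?c * ?V) = k ^ (m * p) * ?V"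
    by (metis mult.assoc power_add)
  also have "[k ^ (m * p) * ?V = 1 * ?V] (mod k ^ m - 1)"
    by (rule cong_scalar_right, rule power_cong_one) simp
  finally show ?thesis by simp
qed

lemma cyclic_value_rotate_right_cong:
  assumes "periodic m x" "m > 0"
  shows "[cyclic_value k m (\<lambda>i. x (i + (m - 1))) = k * cyclic_value k m x] (mod k ^ m - 1)"
  by (rule cong_sym) (use cyclic_value_mult_power[OF assms, of k 1] in simp)

lemma cyclic_value_rotate_left_cong:
  assumes "periodic m x" "m > 0"
  shows "[cyclic_value k m (\<lambda>i. x (i + 1)) = k ^ (m - 1) * cyclic_value k m x] (mod k ^ m - 1)"
proof -
  let ?V = "cyclic_value k m (\<lambda>i. x (i + 1))"
  have "[?V = k ^ m * ?V] (mod k ^ m - 1)"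
    using power_mult_cong by (rule cong_sym)
  also have "k ^ m * ?V = k ^ (m - 1) * (k * ?V)"
    using assms(2) by (simp add: power_eq_if)
  also have "[\<dots> = k ^ (m - 1) * cyclic_value k m x] (mod k ^ m - 1)"
    using cyclic_value_shift_cong[OF assms(1), of k 1] by (intro cong_scalar_left) simp
  finally show ?thesis .
qed

text \<open>\<open>E j\<close> is the carry into position \<open>j\<close> when the digits \<open>x\<close> are rewritten into the
  digits \<open>y\<close> of a congruent cyclic value: \<open>y j = x j + k E (j + 1) - E j\<close>.\<close>

definition carry_seq :: "int \<Rightarrow> nat \<Rightarrow> (nat \<Rightarrow> int) \<Rightarrow> (nat \<Rightarrow> int) \<Rightarrow> (nat \<Rightarrow> int) \<Rightarrow> bool" where
  "carry_seq k m x y E \<longleftrightarrow> periodic m E \<and> (\<forall>j. k * E (Suc j) = E j + (y j - x j))"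

lemma carry_seq_swap: "carry_seq k m x y E \<Longrightarrow> carry_seq k m y x (\<lambda>j. - E j)"
  unfolding carry_seq_def periodic_def by (simp add: algebra_simps)

lemma carry_seq_sum:
  assumes "carry_seq k m x y E"
  shows "(k - 1) * (\<Sum>j<m. E j) = (\<Sum>j<m. y j - x j)"
proof -
  have "periodic m (\<lambda>j. k * E j)"
    using assms by (simp add: carry_seq_def periodic_def)
  from sum_periodic_Suc[OF this]
  have "k * (\<Sum>j<m. E j) = (\<Sum>j<m. k * E (Suc j))"
    by (simp add: sum_distrib_left)
  also have "\<dots> = (\<Sum>j<m. E j) + (\<Sum>j<m. y j - x j)"
    using assms unfolding carry_seq_def by (simp add: sum.distrib)
  finally show ?thesis by (simp add: algebra_simps)
qed

lemma cyclic_value_cong_carries: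
  fixes k :: int
  assumes "m > 0" "k \<ge> 2" "periodic m x" "periodic m y"
    and "[cyclic_value k m y = cyclic_value k m x] (mod k ^ m - 1)"
  obtains E where "carry_seq k m x y E"
proof -
  define N where "N = k ^ m - 1"
  define d where "d = (\<lambda>i. y i - x i)"
  have d: "periodic m d" using assms(3,4) by (simp add: periodic_def d_def)
  have "N > 0"
    using assms(1,2) one_less_power[of k m] unfolding N_def by linarith
  have "[k ^ j * cyclic_value k m (\<lambda>i. d (i + j)) = k ^ j * 0] (mod N)" for j
  proof -
    have "[cyclic_value k m d = 0] (mod N)"
      using assms(5) by (simp add: d_def cyclic_value_diff N_def cong_iff_dvd_diff)
    then show ?thesis
      using cyclic_value_shift_cong[OF d, of k j] unfolding N_def by (auto intro: cong_trans)
  qed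
  then have dvd: "N dvd cyclic_value k m (\<lambda>i. d (i + j))" for j
    using coprime_power_power_minus_one[OF assms(1)] unfolding N_def
    by (metis cong_0_iff cong_mult_lcancel)
  define E where "E = (\<lambda>j. cyclic_value k m (\<lambda>i. d (i + j)) div N)"
  have V: "cyclic_value k m (\<lambda>i. d (i + j)) = E j * N" for j
    unfolding E_def using dvd[of j] by simp
  have "k * E (Suc j) = E j + (y j - x j)" for j
  proof -
    have "k * cyclic_value k m (\<lambda>i. d (i + Suc j))
        = cyclic_value k m (\<lambda>i. d (i + j)) + d j * N"
      using cyclic_value_Suc[OF periodic_shift[OF d, of j], of k] by (simp add: N_def)
    then have "k * E (Suc j) * N = (E j + d j) * N"
      unfolding V by (simp add: algebra_simps)
    then show ?thesis
      using \<open>N > 0\<close> by (simp add: d_def)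
  qed
  moreover have "periodic m E"
    using d by (simp add: periodic_def E_def flip: add.assoc)
  ultimately show ?thesis
    using that unfolding carry_seq_def by blast
qed

section \<open>Reduced digit sequences\<close>

definition reduced :: "int \<Rightarrow> (nat \<Rightarrow> int) \<Rightarrow> bool" where
  "reduced r x \<longleftrightarrow> (\<forall>j. \<bar>x j\<bar> \<le> r
      \<and> (x j = r \<longrightarrow> 0 \<le> x (Suc j) \<and> x (Suc j) < r)
      \<and> (x j = - r \<longrightarrow> - r < x (Suc j) \<and> x (Suc j) \<le> 0))"

lemma reducedD:
  assumes "reduced r x"
  shows "\<bar>x j\<bar> \<le> r"
    and "x j = r \<Longrightarrow> 0 \<le> x (Suc j) \<and> x (Suc j) < r"
    and "x j = - r \<Longrightarrow> - r < x (Suc j) \<and> x (Suc j) \<le> 0"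
  using assms unfolding reduced_def by blast+

lemma reduced_shift: "reduced r x \<Longrightarrow> reduced r (\<lambda>i. x (i + c))"
  unfolding reduced_def by simp

definition alternating :: "int \<Rightarrow> (nat \<Rightarrow> int) \<Rightarrow> bool" where
  "alternating r x \<longleftrightarrow> (\<forall>j. (x j = - r \<or> x j = 1 - r) \<and> x (Suc j) \<noteq> x j)"

lemma alternating_shift_iff:
  assumes "periodic m x" "m > 0"
  shows "alternating r (\<lambda>i. x (i + c)) \<longleftrightarrow> alternating r x"
proof
  have shift: "alternating r (\<lambda>i. f (i + d))" if "alternating r f" for f :: "nat \<Rightarrow> int" and d
    using that unfolding alternating_def by simp
  have unshift: "(\<lambda>i. x (i + (m - 1) * c + c)) = x"
  proof
    fix i
    have "i + (m - 1) * c + c = i + m * c" using assms(2) by (cases m) auto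
    then show "x (i + (m - 1) * c + c) = x i" using periodic_add_mult[OF assms(1), of i c] by (simp only:)
  qed
  assume "alternating r (\<lambda>i. x (i + c))"
  then have "alternating r (\<lambda>i. x (i + (m - 1) * c + c))" by (rule shift)
  then show "alternating r x" unfolding unshift .
qed (simp add: alternating_def)

lemma reduced_diff_bound: "reduced r x \<Longrightarrow> reduced r y \<Longrightarrow> \<bar>y j - x j\<bar> \<le> 2 * r"
  using reducedD(1)[of r x j] reducedD(1)[of r y j] by linarith

lemma carries_ge_two_constant:
  assumes "r \<ge> 1" "m > 0" "reduced r x" "reduced r y" "carry_seq (2 * r) m x y E"
    and ge2: "\<And>j. E j \<ge> 2"
  shows "r = 1 \<and> (\<forall>j. E j = 2)"
proof -
  define S where "S = (\<Sum>j<m. E j)"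
  have S: "(2 * r - 1) * S = (\<Sum>j<m. y j - x j)"
    using carry_seq_sum[OF assms(5)] by (simp add: S_def)
  have "(\<Sum>j<m. 2) \<le> S"
    unfolding S_def by (rule sum_mono) (rule ge2)
  then have "S \<ge> 2 * int m" by simp
  have "(\<Sum>j<m. y j - x j) \<le> (\<Sum>j<m. 2 * r)"
    by (rule sum_mono) (use reduced_diff_bound[OF assms(3,4)] in \<open>simp add: abs_le_iff\<close>)
  then have D: "(\<Sum>j<m. y j - x j) \<le> 2 * r * int m"
    by (simp add: mult.commute)
  have "(2 * r - 1) * (2 * int m) \<le> (2 * r - 1) * S"
    using \<open>S \<ge> 2 * int m\<close> assms(1) by (intro mult_left_mono) auto
  then have "(2 * r - 1) * (2 * int m) \<le> 2 * r * int m"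
    using S D by linarith
  then have "r * int m \<le> int m"
    by (simp add: algebra_simps)
  have "r = 1"
  proof (rule ccontr)
    assume "r \<noteq> 1"
    then have "2 * int m \<le> r * int m"
      using assms(1) by (intro mult_right_mono) auto
    then show False using \<open>r * int m \<le> int m\<close> assms(2) by linarith
  qed
  then have "(\<Sum>j<m. E j - 2) = 0"
    using S D \<open>S \<ge> 2 * int m\<close> by (simp add: S_def sum_subtractf)
  then have "\<forall>j\<in>{..<m}. E j - 2 = 0"
    using ge2 by (subst (asm) sum_nonneg_eq_0_iff) auto
  then have "E j = 2" for j
    using periodic_mod[of m E j] assms(2,5) by (simp add: carry_seq_def)
  with \<open>r = 1\<close> show ?thesis by blast
qed

lemma carries_not_all_ge_two:
  assumes "r \<ge> 1" "m > 0" "reduced r x" "reduced r y" "carry_seq (2 * r) m x y E"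
  shows "\<exists>j. E j \<le> 1"
proof (rule ccontr)
  assume none: "\<nexists>j. E j \<le> 1"
  have "E j \<ge> 2" for j
  proof -
    have "\<not> E j \<le> 1" using none by blast
    then show ?thesis by linarith
  qed
  then have "r = 1" and E2: "E j = 2" for j
    using carries_ge_two_constant[OF assms] by auto
  have "y j = 1" for j
  proof -
    have "2 * r * E (Suc j) = E j + (y j - x j)"
      using assms(5) unfolding carry_seq_def by blast
    then show ?thesis
      using E2[of j] E2[of "Suc j"] reducedD(1)[OF assms(3), of j] reducedD(1)[OF assms(4), of j]
        \<open>r = 1\<close>
      by (simp add: abs_le_iff)
  qed
  then show False
    using reducedD(2)[OF assms(4), of 0] \<open>r = 1\<close> by simp
qed

lemma carry_le_one:
  assumes "r \<ge> 1" "m > 0" "reduced r x" "reduced r y" "carry_seq (2 * r) m x y E"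
  shows "E j \<le> 1"
proof -
  have step: "E (Suc j) \<le> 1" if "E j \<le> 1" for j
  proof (rule ccontr)
    assume "\<not> E (Suc j) \<le> 1"
    then have "r * 2 \<le> r * E (Suc j)" using assms(1) by (intro mult_left_mono) auto
    moreover have "2 * r * E (Suc j) = E j + (y j - x j)"
      using assms(5) unfolding carry_seq_def by blast
    moreover have "y j - x j \<le> 2 * r"
      using reduced_diff_bound[OF assms(3,4), of j] by (simp add: abs_le_iff)
    ultimately show False using that assms(1) by linarith
  qed
  obtain j0 where "E j0 \<le> 1"
    using carries_not_all_ge_two[OF assms] by blast
  moreover have "periodic m (\<lambda>j. E j \<le> 1)"
    using assms(5) by (simp add: carry_seq_def periodic_def)
  ultimately show ?thesis using periodic_propagate[OF assms(2)] step by blast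
qed

lemma carry_not_one_after_zero:
  assumes "r \<ge> 1" "reduced r x" "reduced r y" "carry_seq (2 * r) m x y E" "E j = 0"
  shows "E (Suc j) \<noteq> 1"
proof
  assume "E (Suc j) = 1"
  have carry: "2 * r * E (Suc i) = E i + (y i - x i)" for i
    using assms(4) unfolding carry_seq_def by blast
  have "y j = r" "x j = - r"
    using carry[of j] assms(5) \<open>E (Suc j) = 1\<close> reducedD(1)[OF assms(2), of j] reducedD(1)[OF assms(3), of j]
    by (simp_all add: abs_le_iff)
  then have "0 \<le> y (Suc j) - x (Suc j)" "y (Suc j) - x (Suc j) \<le> 2 * r - 2"
    using reducedD(2)[OF assms(3), of j] reducedD(3)[OF assms(2), of j] by auto
  then have "0 < 2 * r * E (Suc (Suc j))" "2 * r * E (Suc (Suc j)) < 2 * r * 1"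
    using carry[of "Suc j"] \<open>E (Suc j) = 1\<close> by simp_all
  then show False
    using assms(1) by (simp add: zero_less_mult_iff mult_less_cancel_left)
qed

lemma carry_trichotomy:
  assumes "r \<ge> 1" "m > 0" "reduced r x" "reduced r y" "carry_seq (2 * r) m x y E"
  shows "(\<forall>j. E j = 0) \<or> (\<forall>j. E j = 1) \<or> (\<forall>j. E j = -1)"
proof -
  have carry: "2 * r * E (Suc j) = E j + (y j - x j)" for j
    using assms(5) unfolding carry_seq_def by blast
  have swap: "carry_seq (2 * r) m y x (\<lambda>j. - E j)"
    using assms(5) by (rule carry_seq_swap)
  have range: "E j = -1 \<or> E j = 0 \<or> E j = 1" for j
    using carry_le_one[OF assms, of j] carry_le_one[OF assms(1,2,4,3) swap, of j] by presburger
  have zero: "E (Suc j) = 0" if "E j = 0" for j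
    using carry_not_one_after_zero[OF assms(1,3,4,5) that]
      carry_not_one_after_zero[OF assms(1,4,3) swap, of j] that range[of "Suc j"] by auto
  have no_flip: "E (Suc j) \<noteq> - E j" if "E j \<noteq> 0" for j
    using carry[of j] reduced_diff_bound[OF assms(3,4), of j] range[of j] that
    by (auto simp: abs_le_iff)
  have per: "periodic m (\<lambda>j. E j = c)" for c
    using assms(5) by (simp add: carry_seq_def periodic_def)
  show ?thesis
  proof (cases "\<exists>j0. E j0 = 0")
    case True
    then obtain j0 where "E j0 = 0" by blast
    then show ?thesis using periodic_propagate[OF assms(2) per] zero by blast
  next
    case False
    then have "E (Suc j) = E j" for j
      using no_flip[of j] range[of j] range[of "Suc j"] by force
    then have "E j = E 0" for j
      by (induction j) auto
    then show ?thesis using range[of 0] by metis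
  qed
qed

lemma alternating_if_carry_one:
  assumes "reduced r x" "reduced r y" "\<And>j. y j - x j = 2 * r - 1"
  shows "alternating r x"
  unfolding alternating_def
proof
  fix j
  have two: "x i = - r \<or> x i = 1 - r" for i
    using reducedD(1)[OF assms(1), of i] reducedD(1)[OF assms(2), of i] assms(3)[of i]
    by (auto simp: abs_le_iff)
  have "x (Suc j) \<noteq> x j"
  proof (cases "x j = - r")
    case True
    then show ?thesis using reducedD(3)[OF assms(1), of j] by auto
  next
    case False
    then have "y j = r" using two[of j] assms(3)[of j] by simp
    then have "y (Suc j) < r" using reducedD(2)[OF assms(2), of j] by blast
    then show ?thesis using False two[of j] assms(3)[of "Suc j"] by auto
  qed
  then show "(x j = - r \<or> x j = 1 - r) \<and> x (Suc j) \<noteq> x j" using two[of j] by blast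
qed

text \<open>Potential of a carry \<open>e\<close> that follows the digit \<open>x\<close>: summed over a period, the
  bound of \<open>carry_cost_step\<close> telescopes, so carries cannot decrease the weight of a
  reduced digit sequence.\<close>

definition carry_cost :: "int \<Rightarrow> int \<Rightarrow> int \<Rightarrow> int" where
  "carry_cost r e x = \<bar>e\<bar> - (if (x = r \<and> e = -1) \<or> (x = - r \<and> e = 1) then 1 else 0)"

lemma carry_cost_step:
  fixes r x xp e e' :: int
  assumes "r \<ge> 1" "\<bar>x\<bar> \<le> r" "\<bar>xp\<bar> \<le> r"
    and "xp = r \<Longrightarrow> 0 \<le> x \<and> x < r" and "xp = - r \<Longrightarrow> - r < x \<and> x \<le> 0"
  shows "carry_cost r e' x - carry_cost r e xp \<le> \<bar>x + 2 * r * e' - e\<bar> - \<bar>x\<bar>"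
proof -
  define P where "P = r * e'"
  have eq: "x + 2 * r * e' - e = x + 2 * P - e" by (simp add: P_def)
  consider "e' \<ge> 2" | "e' \<le> -2" | "e' = -1" | "e' = 0" | "e' = 1" by linarith
  then show ?thesis
  proof cases
    case 1
    have "r * 2 \<le> P" "1 * e' \<le> P"
      unfolding P_def using 1 assms(1) by (intro mult_left_mono mult_right_mono; simp)+
    then show ?thesis unfolding eq using assms 1 by (auto simp: carry_cost_def abs_if split: if_splits)
  next
    case 2
    have "P \<le> r * (-2)" "P \<le> 1 * e'"
      unfolding P_def using 2 assms(1) by (intro mult_left_mono mult_right_mono_neg; simp)+
    then show ?thesis unfolding eq using assms 2 by (auto simp: carry_cost_def abs_if split: if_splits)
  qed (use assms in \<open>auto simp: carry_cost_def abs_if split: if_splits\<close>)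
qed

lemma reduced_weight_le_carry:
  assumes "r \<ge> 1" "periodic m x" "periodic m y" "reduced r x" "carry_seq (2 * r) m x y E"
  shows "weight m x \<le> weight m y"
proof -
  have carry: "2 * r * E (Suc j) = E j + (y j - x j)" for j
    using assms(5) unfolding carry_seq_def by blast
  define G where "G j = carry_cost r (E (Suc j)) (x j)" for j
  have "G (Suc j) - G j \<le> \<bar>y (Suc j)\<bar> - \<bar>x (Suc j)\<bar>" for j
  proof -
    have "y (Suc j) = x (Suc j) + 2 * r * E (Suc (Suc j)) - E (Suc j)"
      using carry[of "Suc j"] by simp
    then show ?thesis
      unfolding G_def using carry_cost_step[OF assms(1) reducedD(1)[OF assms(4)] reducedD(1)[OF assms(4)]
        reducedD(2)[OF assms(4), of j] reducedD(3)[OF assms(4), of j]] by simp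
  qed
  then have "(\<Sum>j<m. G (Suc j) - G j) \<le> (\<Sum>j<m. \<bar>y (Suc j)\<bar> - \<bar>x (Suc j)\<bar>)"
    by (rule sum_mono)
  moreover have "(\<Sum>j<m. G (Suc j) - G j) = 0"
  proof -
    have "periodic m (\<lambda>j. E (j + 1))"
      using assms(5) periodic_shift unfolding carry_seq_def by blast
    then have "periodic m G"
      using assms(2) by (simp add: G_def periodic_def)
    then have "G m = G 0" unfolding periodic_def by (metis add_0)
    then show ?thesis by (simp add: sum_lessThan_telescope)
  qed
  moreover have "(\<Sum>j<m. \<bar>y (Suc j)\<bar> - \<bar>x (Suc j)\<bar>) = weight m y - weight m x"
    using sum_periodic_Suc[OF periodic_comp[OF assms(2), of abs]]
      sum_periodic_Suc[OF periodic_comp[OF assms(3), of abs]]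
    by (simp add: weight_def sum_subtractf)
  ultimately show ?thesis by simp
qed

lemma reduced_weight_minimal:
  assumes "r \<ge> 1" "m > 0" "periodic m x" "periodic m y" "reduced r x"
    and "[cyclic_value (2 * r) m y = cyclic_value (2 * r) m x] (mod (2 * r) ^ m - 1)"
  shows "weight m x \<le> weight m y"
proof -
  obtain E where "carry_seq (2 * r) m x y E"
    using cyclic_value_cong_carries[OF assms(2) _ assms(3,4,6)] assms(1) by auto
  then show ?thesis by (rule reduced_weight_le_carry[OF assms(1,3,4,5)])
qed

lemma reduced_cyclic_value_unique:
  assumes "r \<ge> 1" "m > 0" "periodic m x" "periodic m y" "reduced r x" "reduced r y"
    and "\<not> alternating r x" "\<not> alternating r y"
    and "[cyclic_value (2 * r) m y = cyclic_value (2 * r) m x] (mod (2 * r) ^ m - 1)"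
  shows "y = x"
proof -
  obtain E where E: "carry_seq (2 * r) m x y E"
    using cyclic_value_cong_carries[OF assms(2) _ assms(3,4,9)] assms(1) by auto
  have carry: "2 * r * E (Suc j) = E j + (y j - x j)" for j
    using E unfolding carry_seq_def by blast
  consider "\<forall>j. E j = 0" | "\<forall>j. E j = 1" | "\<forall>j. E j = -1"
    using carry_trichotomy[OF assms(1,2,5,6) E] by blast
  then show ?thesis
  proof cases
    case 1
    then show ?thesis using carry by fastforce
  next
    case 2
    then have "alternating r x"
      using carry by (intro alternating_if_carry_one[OF assms(5,6)]) (simp add: algebra_simps)
    then show ?thesis using assms(7) by blast
  next
    case 3
    then have "alternating r y"
      using carry by (intro alternating_if_carry_one[OF assms(6,5)]) (simp add: algebra_simps)
    then show ?thesis using assms(8) by blast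
  qed
qed

section \<open>An action of BS(1,k) modulo k^m - 1\<close>

fun t_exp :: "word \<Rightarrow> int" where
  "t_exp [] = 0"
| "t_exp ((GA, b) # w) = t_exp w"
| "t_exp ((GT, b) # w) = (if b then 1 else -1) + t_exp w"

lemma t_exp_append: "t_exp (u @ v) = t_exp u + t_exp v"
  by (induction u rule: t_exp.induct) auto

lemma t_exp_inv_word: "t_exp (inv_word w) = - t_exp w"
  by (induction w rule: t_exp.induct) (auto simp: inv_word_def inv_letter_def t_exp_append)

lemma t_exp_replicate_a: "t_exp (replicate n (GA, b)) = 0"
  by (induction n) auto

lemma bs_eq_t_exp: "bs_eq k u v \<Longrightarrow> t_exp u = t_exp v"
proof (induction rule: bs_eq.induct)
  case (bs_free l)
  obtain g b where "l = (g, b)" by fastforce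
  then show ?case by (cases g) (auto simp: inv_letter_def)
qed (auto simp: t_exp_append t_exp_replicate_a)

lemma bs_conj_t_exp: "bs_conj k u v \<Longrightarrow> t_exp v = t_exp u"
  unfolding bs_conj_def by (auto dest: bs_eq_t_exp simp: t_exp_append t_exp_inv_word)

text \<open>The action \<open>a: z \<mapsto> z + 1\<close>, \<open>t: z \<mapsto> k z\<close> of BS(1,k) on \<open>\<int>[1/k]\<close>, reduced
  modulo \<open>k^m - 1\<close>; there \<open>t^(-1)\<close> acts by \<open>k^(m-1)\<close>, the inverse of \<open>k\<close>.\<close>

fun bs_act :: "nat \<Rightarrow> nat \<Rightarrow> word \<Rightarrow> int \<Rightarrow> int" where
  "bs_act k m [] z = z"
| "bs_act k m ((GA, b) # w) z = bs_act k m w z + (if b then 1 else -1)"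
| "bs_act k m ((GT, b) # w) z = (if b then int k else int k ^ (m - 1)) * bs_act k m w z"

lemma bs_act_append: "bs_act k m (u @ v) z = bs_act k m u (bs_act k m v z)"
  by (induction u rule: t_exp.induct) auto

lemma bs_act_replicate_a:
  "bs_act k m (replicate n (GA, b)) z = z + (if b then int n else - int n)"
  by (induction n) auto

lemma bs_act_cong:
  "[z = z'] (mod N) \<Longrightarrow> [bs_act k m w z = bs_act k m w z'] (mod N)"
  by (induction w rule: t_exp.induct) (simp_all add: cong_add cong_scalar_left)

fun act_exp :: "nat \<Rightarrow> word \<Rightarrow> nat" where
  "act_exp m [] = 0"
| "act_exp m ((GA, b) # w) = act_exp m w"
| "act_exp m ((GT, b) # w) = (if b then 1 else m - 1) + act_exp m w"

lemma bs_act_affine: "bs_act k m w z = int k ^ act_exp m w * z + bs_act k m w 0"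
  by (induction w rule: t_exp.induct) (simp_all add: algebra_simps power_add)

lemma act_exp_cong_t_exp:
  assumes "m > 0"
  shows "[int (act_exp m w) = t_exp w] (mod int m)"
proof (induction w rule: t_exp.induct)
  case (3 b w)
  have "[int (if b then 1 else m - 1) = (if b then 1 else -1)] (mod int m)"
    using assms by (simp add: cong_iff_dvd_diff of_nat_diff)
  from cong_add[OF this 3] show ?case by simp
qed simp_all

lemma bs_eq_bs_act:
  assumes "bs_eq k u v" "m > 0"
  shows "[bs_act k m u z = bs_act k m v z] (mod int k ^ m - 1)"
  using assms(1)
proof (induction arbitrary: z rule: bs_eq.induct)
  case (bs_ctxt u v x y)
  then show ?case by (simp add: bs_act_append bs_act_cong)
next
  case (bs_free l)
  obtain g b where "l = (g, b)" by fastforce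
  moreover have "int k * (int k ^ (m - 1) * z) = int k ^ m * z"
    using assms(2) by (simp add: power_eq_if)
  ultimately show ?case using power_mult_cong[of "int k" m z]
    by (cases g) (auto simp: inv_letter_def mult.assoc[symmetric] mult.commute[of _ "int k"])
next
  case bs_rel
  have "int k * (int k ^ (m - 1) * z + 1) = int k ^ m * z + int k"
    using assms(2) by (simp add: power_eq_if algebra_simps)
  then show ?case using cong_add[OF power_mult_cong[of "int k" m z] cong_refl[of "int k"]]
    by (simp add: bs_act_replicate_a)
qed (auto intro: cong_sym cong_trans)

lemma bs_eq_inv_word_cancel: "bs_eq k (inv_word g @ g) []"
proof (induction g)
  case (Cons l g)
  have "bs_eq k (inv_word g @ [inv_letter l, inv_letter (inv_letter l)] @ g) (inv_word g @ [] @ g)"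
    by (rule bs_ctxt[OF bs_free])
  then have "bs_eq k (inv_word (l # g) @ l # g) (inv_word g @ g)"
    by (simp add: inv_word_def inv_letter_def)
  then show ?case using Cons bs_trans by blast
qed (simp add: inv_word_def bs_refl)

lemma bs_act_translation:
  assumes "t_exp w = int m" "m > 0"
  shows "[bs_act k m w z = z + bs_act k m w 0] (mod int k ^ m - 1)"
proof -
  have "[int (act_exp m w) = int m] (mod int m)"
    using act_exp_cong_t_exp[OF assms(2), of w] assms(1) by simp
  then have "[act_exp m w = m] (mod m)"
    by (simp only: cong_int_iff)
  then have "m dvd act_exp m w"
    using cong_dvd_iff by (metis dvd_refl)
  then have "[int k ^ act_exp m w * z + bs_act k m w 0 = 1 * z + bs_act k m w 0] (mod int k ^ m - 1)"
    by (intro cong_add cong_scalar_right power_cong_one) auto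
  then show ?thesis by (subst bs_act_affine) simp
qed

lemma bs_conj_bs_act:
  assumes "bs_conj k u v" "t_exp u = int m" "m > 0"
  shows "\<exists>p. [bs_act k m v 0 = int k ^ p * bs_act k m u 0] (mod int k ^ m - 1)"
proof -
  define N where "N = int k ^ m - 1"
  obtain g where g: "bs_eq k (g @ u @ inv_word g) v"
    using assms(1) unfolding bs_conj_def by blast
  define z0 where "z0 = bs_act k m g 0"
  have "[bs_act k m (inv_word g) z0 = 0] (mod N)"
    using bs_eq_bs_act[OF bs_eq_inv_word_cancel assms(3)] by (simp add: z0_def N_def bs_act_append)
  then have "[bs_act k m g (bs_act k m u (bs_act k m (inv_word g) z0))
      = bs_act k m g (bs_act k m u 0)] (mod N)"
    by (intro bs_act_cong)
  then have "[bs_act k m (g @ u @ inv_word g) z0 = bs_act k m g (bs_act k m u 0)] (mod N)"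
    by (simp add: bs_act_append)
  moreover have "[bs_act k m v z0 = bs_act k m (g @ u @ inv_word g) z0] (mod N)"
    using bs_eq_bs_act[OF g assms(3)] unfolding N_def by (rule cong_sym)
  moreover have "[bs_act k m v z0 = z0 + bs_act k m v 0] (mod N)"
    using bs_act_translation[of v m k z0] bs_conj_t_exp[OF assms(1)] assms(2,3)
    unfolding N_def by simp
  ultimately have "[z0 + bs_act k m v 0 = z0 + int k ^ act_exp m g * bs_act k m u 0] (mod N)"
    using bs_act_affine[of k m g "bs_act k m u 0"] unfolding z0_def
    by (metis add.commute cong_sym cong_trans)
  then show ?thesis unfolding N_def cong_add_lcancel by blast
qed

section \<open>Digit sequences of words\<close>

fun a_count :: "word \<Rightarrow> nat" where
  "a_count [] = 0"
| "a_count ((GA, b) # w) = Suc (a_count w)"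
| "a_count ((GT, b) # w) = a_count w"

lemma a_count_t_exp_le_length: "int (a_count w) + \<bar>t_exp w\<bar> \<le> int (length w)"
  by (induction w rule: a_count.induct) auto

fun digits :: "nat \<Rightarrow> word \<Rightarrow> nat \<Rightarrow> int" where
  "digits m [] = (\<lambda>_. 0)"
| "digits m ((GA, b) # w) = (\<lambda>i. digits m w i + (if m dvd i then (if b then 1 else -1) else 0))"
| "digits m ((GT, b) # w) = (\<lambda>i. digits m w (i + (if b then m - 1 else 1)))"

lemma periodic_digits: "periodic m (digits m w)"
proof (induction w rule: a_count.induct)
  case (2 b w)
  then show ?case by (simp add: periodic_def)
next
  case (3 b w)
  show ?case
    using periodic_shift[OF 3, of "if b then m - 1 else 1"] by (simp only: digits.simps)
qed (simp add: periodic_def)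

lemma dvd_less_iff_eq_0: "i < m \<Longrightarrow> (m::nat) dvd i \<longleftrightarrow> i = 0"
  by (auto dest: dvd_imp_le)

lemma weight_digits_le:
  assumes "m > 0"
  shows "weight m (digits m w) \<le> int (a_count w)"
proof (induction w rule: a_count.induct)
  case (2 b w)
  have "weight m (digits m ((GA, b) # w)) \<le> (\<Sum>i<m. \<bar>digits m w i\<bar> + (if i = 0 then 1 else 0))"
    unfolding weight_def by (intro sum_mono) (auto simp: dvd_less_iff_eq_0)
  also have "\<dots> = weight m (digits m w) + 1"
    using assms by (simp add: weight_def sum.distrib)
  finally show ?case using 2 by simp
next
  case (3 b w)
  then show ?case using weight_shift[OF periodic_digits] by simp
qed (simp add: weight_def)

lemma cyclic_value_digits:
  assumes "m > 0"
  shows "[cyclic_value (int k) m (digits m w) = bs_act k m w 0] (mod int k ^ m - 1)"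
proof (induction w rule: a_count.induct)
  case (2 b w)
  define e :: int where "e = (if b then 1 else -1)"
  have "(\<Sum>i<m. (if m dvd i then e else 0) * int k ^ i) = (\<Sum>i<m. if i = 0 then e else 0)"
    by (rule sum.cong) (auto simp: dvd_less_iff_eq_0)
  then have "cyclic_value (int k) m (digits m ((GA, b) # w)) = cyclic_value (int k) m (digits m w) + e"
    using assms unfolding digits.simps e_def[symmetric] cyclic_value_def
    by (simp add: sum.distrib distrib_right)
  then show ?case using 2 by (simp add: cong_add e_def)
next
  case (3 b w)
  let ?c = "if b then int k else int k ^ (m - 1)" and ?N = "int k ^ m - 1"
  have "[cyclic_value (int k) m (digits m ((GT, b) # w)) = ?c * cyclic_value (int k) m (digits m w)] (mod ?N)"
    using cyclic_value_rotate_right_cong[OF periodic_digits[of m w] assms, of "int k"]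
      cyclic_value_rotate_left_cong[OF periodic_digits[of m w] assms, of "int k"]
    by (cases b) simp_all
  moreover have "[?c * cyclic_value (int k) m (digits m w) = ?c * bs_act k m w 0] (mod ?N)"
    using 3 by (rule cong_scalar_left)
  ultimately show ?case by (auto intro: cong_trans)
qed (simp add: cyclic_value_def)

lemma bs_conj_if_bs_eq: "bs_eq k u v \<Longrightarrow> bs_conj k u v"
  unfolding bs_conj_def by (rule exI[of _ "[]"]) (simp add: inv_word_def)

lemma bs_conj_trans: "bs_conj k u v \<Longrightarrow> bs_conj k v w \<Longrightarrow> bs_conj k u w"
proof -
  assume "bs_conj k u v" "bs_conj k v w"
  then obtain g h where g: "bs_eq k (g @ u @ inv_word g) v" and h: "bs_eq k (h @ v @ inv_word h) w"
    unfolding bs_conj_def by blast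
  have "bs_eq k (h @ (g @ u @ inv_word g) @ inv_word h) (h @ v @ inv_word h)"
    by (rule bs_ctxt[OF g])
  then have "bs_eq k ((h @ g) @ u @ inv_word (h @ g)) w"
    using h bs_trans by (simp add: inv_word_def)
  then show "bs_conj k u w" unfolding bs_conj_def by blast
qed

lemma bs_conj_rotate1: "bs_conj k u (rotate1 u)"
proof (cases u)
  case (Cons l u')
  have "bs_eq k ([] @ [inv_letter l, inv_letter (inv_letter l)] @ u' @ [l]) ([] @ [] @ u' @ [l])"
    by (rule bs_ctxt[OF bs_free])
  then have "bs_eq k ([inv_letter l] @ u @ inv_word [inv_letter l]) (rotate1 u)"
    by (simp add: Cons inv_word_def inv_letter_def)
  then show ?thesis unfolding bs_conj_def by blast
qed (simp add: bs_conj_if_bs_eq bs_refl)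

lemma bs_conj_rotate: "bs_conj k u (rotate n u)"
  by (induction n) (auto intro: bs_conj_trans bs_conj_rotate1 bs_conj_if_bs_eq bs_refl)

lemma bs_conj_geodesic_if_shortest:
  assumes "\<And>v. bs_conj k v w \<Longrightarrow> length w \<le> length v"
  shows "bs_conj_geodesic k w"
proof -
  have length_w: "bs_length k w = length w"
    unfolding bs_length_def
    by (rule Least_equality) (auto intro: bs_refl assms bs_conj_if_bs_eq)
  have "length w \<le> bs_length k v" if "bs_conj k v w" for v
  proof -
    have "\<exists>v'. bs_eq k v' v \<and> length v' = bs_length k v"
      unfolding bs_length_def by (rule LeastI_ex) (auto intro: bs_refl)
    then obtain v' where "bs_eq k v' v" "length v' = bs_length k v" by blast
    then show ?thesis
      using assms bs_conj_trans[OF bs_conj_if_bs_eq that] by metis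
  qed
  then show ?thesis
    unfolding bs_conj_geodesic_def bs_geodesic_def using length_w by simp
qed

section \<open>The words of A_set\<close>

lemma tword_Nil [simp]: "tword [] = []"
  by (simp add: tword_def)

lemma tword_Cons [simp]: "tword (x # xs) = apow x @ (GT, True) # tword xs"
  by (simp add: tword_def)

lemma tword_append: "tword (xs @ ys) = tword xs @ tword ys"
  by (simp add: tword_def)

lemma tword_concat_replicate: "tword (concat (replicate n xs)) = concat (replicate n (tword xs))"
  by (induction n) (simp_all add: tword_append)

lemma length_apow: "length (apow x) = nat \<bar>x\<bar>"
  by (simp add: apow_def)

lemma t_exp_apow: "t_exp (apow x) = 0"
  by (simp add: apow_def t_exp_replicate_a)

lemma bs_act_apow: "bs_act k m (apow x) z = z + x"
  by (simp add: apow_def bs_act_replicate_a)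

lemma t_exp_tword: "t_exp (tword xs) = int (length xs)"
  by (induction xs) (simp_all add: t_exp_append t_exp_apow)

lemma bs_act_tword: "bs_act k m (tword xs) 0 = (\<Sum>i<length xs. xs ! i * int k ^ i)"
proof (induction xs)
  case (Cons x xs)
  then show ?case
    by (simp add: bs_act_append bs_act_apow sum.lessThan_Suc_shift sum_distrib_left algebra_simps
        del: sum.lessThan_Suc)
qed simp

lemma length_tword: "length (tword xs) = length xs + (\<Sum>i<length xs. nat \<bar>xs ! i\<bar>)"
proof (induction xs)
  case (Cons x xs)
  then show ?case
    by (simp add: length_apow sum.lessThan_Suc_shift del: sum.lessThan_Suc)
qed simp

lemma tword_rotate1: "\<exists>n. tword (rotate1 xs) = rotate n (tword xs)"
proof (cases xs)
  case (Cons x ys)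
  have "tword (rotate1 xs) = tword ys @ tword [x]"
    by (simp add: Cons tword_append)
  also have "\<dots> = rotate (length (tword [x])) (tword [x] @ tword ys)"
    by (rule rotate_append[symmetric])
  also have "tword [x] @ tword ys = tword xs"
    unfolding Cons tword_append[symmetric] by simp
  finally show ?thesis by blast
qed simp

lemma tword_rotate: "\<exists>n. tword (rotate c xs) = rotate n (tword xs)"
proof (induction c)
  case 0
  show ?case by (rule exI[of _ 0]) simp
next
  case (Suc c)
  then obtain n where "tword (rotate c xs) = rotate n (tword xs)" by blast
  moreover obtain n' where "tword (rotate1 (rotate c xs)) = rotate n' (tword (rotate c xs))"
    using tword_rotate1 by blast
  ultimately show ?case by (auto simp: rotate_rotate)
qed

definition cyclic_nth :: "'a list \<Rightarrow> nat \<Rightarrow> 'a" where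
  "cyclic_nth xs j = xs ! (j mod length xs)"

lemma periodic_cyclic_nth: "periodic (length xs) (cyclic_nth xs)"
  by (simp add: periodic_def cyclic_nth_def)

lemma cyclic_nth_rotate:
  "xs \<noteq> [] \<Longrightarrow> cyclic_nth (rotate c xs) = (\<lambda>j. cyclic_nth xs (j + c))"
  by (simp add: cyclic_nth_def nth_rotate fun_eq_iff) (metis add.commute mod_add_right_eq)

lemma cyclic_nth_inj:
  assumes "length xs = length ys" "cyclic_nth xs = cyclic_nth ys"
  shows "xs = ys"
proof (rule nth_equalityI)
  fix i assume "i < length xs"
  then show "xs ! i = ys ! i"
    using fun_cong[OF assms(2), of i] assms(1) by (simp add: cyclic_nth_def)
qed (rule assms(1))

lemma sum_cyclic_nth: "length xs = m \<Longrightarrow> (\<Sum>i<m. f (cyclic_nth xs i) i) = (\<Sum>i<m. f (xs ! i) i)"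
  by (auto simp: cyclic_nth_def intro: sum.cong)

lemma bs_act_tword_cyclic_value:
  "length xs = m \<Longrightarrow> bs_act k m (tword xs) 0 = cyclic_value (int k) m (cyclic_nth xs)"
  using sum_cyclic_nth[of xs m "\<lambda>x i. x * int k ^ i"] by (simp add: bs_act_tword cyclic_value_def)

lemma length_tword_weight:
  "length xs = m \<Longrightarrow> int (length (tword xs)) = int m + weight m (cyclic_nth xs)"
  using sum_cyclic_nth[of xs m "\<lambda>x i. \<bar>x\<bar>"] by (simp add: length_tword weight_def of_nat_sum)

lemma nth_concat_replicate_pair:
  "i < 2 * n \<Longrightarrow> concat (replicate n [a, b]) ! i = (if even i then a else b)"
proof (induction n arbitrary: i)
  case (Suc n)
  consider "i = 0" | "i = 1" | j where "i = Suc (Suc j)"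
    by (metis One_nat_def not0_implies_Suc)
  then show ?case
    by cases (use Suc in auto)
qed simp

lemma alternating_cyclic_nth:
  assumes "length xs = m" "m > 0" "alternating r (cyclic_nth xs)"
  shows "even m \<and> (xs = concat (replicate (m div 2) [1 - r, - r]) \<or> xs = concat (replicate (m div 2) [- r, 1 - r]))"
proof -
  let ?x = "cyclic_nth xs"
  have two: "?x j = - r \<or> ?x j = 1 - r" and next_ne: "?x (Suc j) \<noteq> ?x j" for j
    using assms(3) unfolding alternating_def by blast+
  have parity: "?x j = - r \<longleftrightarrow> (?x 0 = - r \<longleftrightarrow> even j)" for j
  proof (induction j)
    case (Suc j)
    then show ?case using two[of j] two[of "Suc j"] next_ne[of j] by auto
  qed simp
  have "?x m = ?x 0"
    using periodic_cyclic_nth[of xs] assms(1) unfolding periodic_def by (metis add_0)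
  then have "even m" using parity[of m] two[of 0] by auto
  have xs_nth: "xs ! i = (if (?x 0 = - r \<longleftrightarrow> even i) then - r else 1 - r)" if "i < m" for i
    using parity[of i] two[of i] that assms(1) by (auto simp: cyclic_nth_def)
  have "length (concat (replicate (m div 2) [a, b])) = m" for a b :: int
    using \<open>even m\<close> by (simp add: length_concat sum_list_replicate) presburger
  then show ?thesis
    using xs_nth assms(1) \<open>even m\<close>
    by (cases "?x 0 = - r") (auto intro!: nth_equalityI simp: nth_concat_replicate_pair)
qed

lemma pred_mod_Suc:
  assumes "(m::nat) > 0"
  shows "(Suc j mod m + m - 1) mod m = j mod m"
proof (cases "Suc j mod m = 0")
  case True
  then have "j mod m = m - 1" using assms by (auto simp: mod_Suc split: if_splits)
  then show ?thesis using True assms by simp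
next
  case False
  then show ?thesis by (auto simp: mod_Suc split: if_splits)
qed

lemma A_set_tword:
  assumes "w \<in> A_set r m" "m > 0"
  obtains xs where "length xs = m" "w = tword xs"
    "reduced (int r) (cyclic_nth xs)" "\<not> alternating (int r) (cyclic_nth xs)"
proof -
  obtain xs where len: "length xs = m" and w: "w = tword xs"
    and bound: "\<forall>i<m. \<bar>xs ! i\<bar> \<le> int r"
    and after: "\<forall>i<m. (xs ! ((i + m - 1) mod m) = int r \<longrightarrow> 0 \<le> xs ! i \<and> xs ! i < int r)
              \<and> (xs ! ((i + m - 1) mod m) = - int r \<longrightarrow> - int r < xs ! i \<and> xs ! i \<le> 0)"
    and excluded: "even m \<longrightarrow> w \<noteq> concat (replicate (m div 2) (tword [- (int r - 1), - int r]))
         \<and> w \<noteq> concat (replicate (m div 2) (tword [- int r, - (int r - 1)]))"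
    using assms(1) unfolding A_set_def by blast
  have "reduced (int r) (cyclic_nth xs)"
    unfolding reduced_def
  proof
    fix j
    have "Suc j mod m < m" "j mod m < m" using assms(2) by simp_all
    then show "\<bar>cyclic_nth xs j\<bar> \<le> int r
      \<and> (cyclic_nth xs j = int r \<longrightarrow> 0 \<le> cyclic_nth xs (Suc j) \<and> cyclic_nth xs (Suc j) < int r)
      \<and> (cyclic_nth xs j = - int r \<longrightarrow> - int r < cyclic_nth xs (Suc j) \<and> cyclic_nth xs (Suc j) \<le> 0)"
      using bound after pred_mod_Suc[OF assms(2), of j] by (simp add: cyclic_nth_def len)
  qed
  moreover have "\<not> alternating (int r) (cyclic_nth xs)"
  proof
    assume "alternating (int r) (cyclic_nth xs)"
    from alternating_cyclic_nth[OF len assms(2) this] show False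
      using excluded w by (auto simp: tword_concat_replicate)
  qed
  ultimately show ?thesis using that len w by blast
qed

lemma bs_conj_reduced_tword_rotate:
  assumes "r \<ge> 1" "k = 2 * r" "m > 0" "length xs = m" "length ys = m"
    and "reduced (int r) (cyclic_nth xs)" "\<not> alternating (int r) (cyclic_nth xs)"
    and "reduced (int r) (cyclic_nth ys)" "\<not> alternating (int r) (cyclic_nth ys)"
    and "bs_conj k (tword xs) (tword ys)"
  shows "\<exists>n. tword ys = rotate n (tword xs)"
proof -
  let ?x = "cyclic_nth xs" and ?y = "cyclic_nth ys"
  have per_x: "periodic m ?x" and per_y: "periodic m ?y"
    using periodic_cyclic_nth assms(4,5) by metis+
  obtain p where "[bs_act k m (tword ys) 0 = int k ^ p * bs_act k m (tword xs) 0] (mod int k ^ m - 1)"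
    using bs_conj_bs_act[OF assms(10)] assms(3,4) by (auto simp: t_exp_tword)
  then have "[cyclic_value (int k) m ?y = int k ^ p * cyclic_value (int k) m ?x] (mod int k ^ m - 1)"
    using assms(4,5) by (simp add: bs_act_tword_cyclic_value)
  then have "[cyclic_value (int k) m ?y = cyclic_value (int k) m (\<lambda>i. ?x (i + (m - 1) * p))]
      (mod int k ^ m - 1)"
    using cyclic_value_mult_power[OF per_x assms(3)] by (rule cong_trans)
  moreover have "cyclic_nth (rotate ((m - 1) * p) xs) = (\<lambda>i. ?x (i + (m - 1) * p))"
    using assms(3,4) by (auto intro: cyclic_nth_rotate)
  ultimately have "?y = cyclic_nth (rotate ((m - 1) * p) xs)"
    using reduced_cyclic_value_unique[of "int r" m "\<lambda>i. ?x (i + (m - 1) * p)" ?y]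
      assms(1-3,6-9) per_y periodic_shift[OF per_x] reduced_shift[OF assms(6)]
      alternating_shift_iff[OF per_x assms(3)]
    by simp
  then have "ys = rotate ((m - 1) * p) xs"
    using assms(4,5) by (intro cyclic_nth_inj[symmetric]) simp_all
  then show ?thesis using tword_rotate by blast
qed

lemma bs_conj_reduced_tword_length_le:
  assumes "r \<ge> 1" "k = 2 * r" "m > 0" "length xs = m"
    and "reduced (int r) (cyclic_nth xs)" "bs_conj k v (tword xs)"
  shows "length (tword xs) \<le> length v"
proof -
  let ?x = "cyclic_nth xs" and ?d = "digits m v"
  have "t_exp v = int m"
    using bs_conj_t_exp[OF assms(6)] assms(4) by (simp add: t_exp_tword)
  then obtain p where "[bs_act k m (tword xs) 0 = int k ^ p * bs_act k m v 0] (mod int k ^ m - 1)"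
    using bs_conj_bs_act[OF assms(6)] assms(3) by blast
  moreover have "[int k ^ p * bs_act k m v 0 = int k ^ p * cyclic_value (int k) m ?d] (mod int k ^ m - 1)"
    using cyclic_value_digits[OF assms(3)] by (intro cong_scalar_left) (rule cong_sym)
  moreover note cyclic_value_mult_power[OF periodic_digits assms(3), of "int k" p]
  ultimately have "[cyclic_value (int k) m (\<lambda>i. ?d (i + (m - 1) * p)) = cyclic_value (int k) m ?x]
      (mod int k ^ m - 1)"
    using assms(4) by (metis bs_act_tword_cyclic_value cong_sym cong_trans)
  then have "weight m ?x \<le> weight m (\<lambda>i. ?d (i + (m - 1) * p))"
    using reduced_weight_minimal[of "int r" m ?x] assms(1-5) periodic_cyclic_nth[of xs]
      periodic_shift[OF periodic_digits] by simp
  also have "\<dots> \<le> int (a_count v)"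
    using weight_shift[OF periodic_digits] weight_digits_le[OF assms(3)] by simp
  finally show ?thesis
    using length_tword_weight[OF assms(4)] a_count_t_exp_le_length[of v] \<open>t_exp v = int m\<close> by linarith
qed

theorem lemma4p5:
  fixes r m k :: nat
  assumes "r \<ge> 1" and "k = 2 * r" and "m > 0"
  shows "(\<forall>u \<in> A_set r m. \<forall>v \<in> A_set r m. bs_conj k u v \<longleftrightarrow> (\<exists>n. v = rotate n u))
       \<and> (\<forall>w \<in> A_set r m. bs_conj_geodesic k w)"
proof (intro conjI ballI)
  fix u v assume "u \<in> A_set r m" "v \<in> A_set r m"
  then obtain xs ys where "length xs = m" "u = tword xs"
      "reduced (int r) (cyclic_nth xs)" "\<not> alternating (int r) (cyclic_nth xs)"
    and "length ys = m" "v = tword ys"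
      "reduced (int r) (cyclic_nth ys)" "\<not> alternating (int r) (cyclic_nth ys)"
    using A_set_tword assms(3) by metis
  then show "bs_conj k u v \<longleftrightarrow> (\<exists>n. v = rotate n u)"
    using bs_conj_reduced_tword_rotate[OF assms] bs_conj_rotate by blast
next
  fix w assume "w \<in> A_set r m"
  then obtain xs where "length xs = m" "w = tword xs" "reduced (int r) (cyclic_nth xs)"
    using A_set_tword assms(3) by metis
  then show "bs_conj_geodesic k w"
    using bs_conj_reduced_tword_length_le[OF assms] by (blast intro: bs_conj_geodesic_if_shortest)
qed

end
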